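(* Let $n\neq 1$ be a real number, $k_n=n-1$, and $k_0,k_1,k_2\in\mathbb{R}$. On the phase space with canonical coordinates $(r,\phi,p_r,p_\phi)$, $r>0$, restricted to the open set where $\cos(k_n\phi)\neq 0$, consider $$H_{nc2}=\tfrac12 r^{2n}\Big(p_r^2+\tfrac{p_\phi^2}{r^2}\Big)+k_0r^{n-1}+r^{2k_n}\Big(\frac{k_1}{\cos^2(k_n\phi)}+k_2\frac{\sin(k_n\phi)}{\cos^2(k_n\phi)}\Big).$$ With $P_1=r^n\big(p_r\cos(k_n\phi)+\tfrac1r p_\phi\sin(k_n\phi)\big)$, the functions $$J_{c2}=p_\phi^2+2\Big(\frac{k_1}{\cos^2(k_n\phi)}+k_2\frac{\sin(k_n\phi)}{\cos^2(k_n\phi)}\Big),$$ $$J_{c3}=P_1p_\phi+k_0\sin(k_n\phi)+2k_1r^{k_n}\sec(k_n\phi)\tan(k_n\phi)+k_2r^{k_n}\big(\sec^2(k_n\phi)+\tan^2(k_n\phi)\big)$$ are constants of motion of $H_{nc2}$, i.e. $\{J_{c2},H_{nc2}\}=0$ and $\{J_{c3},H_{nc2}\}=0$; hence $H_{nc2}$ is superintegrable.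
   Context: The Poisson bracket is the canonical one in $(r,\phi,p_r,p_\phi)$. A constant of motion of $H$ is a function $F$ with $\{F,H\}=0$. *)

theory Defs
  imports "HOL-Analysis.Analysis"
begin

type_synonym phase_fun = "real \<Rightarrow> real \<Rightarrow> real \<Rightarrow> real \<Rightarrow> real"

definition d_r :: "phase_fun \<Rightarrow> phase_fun" where
  "d_r F r phi pr pphi = deriv (\<lambda>x. F x phi pr pphi) r"
definition d_phi :: "phase_fun \<Rightarrow> phase_fun" where
  "d_phi F r phi pr pphi = deriv (\<lambda>x. F r x pr pphi) phi"
definition d_pr :: "phase_fun \<Rightarrow> phase_fun" where
  "d_pr F r phi pr pphi = deriv (\<lambda>x. F r phi x pphi) pr"
definition d_pphi :: "phase_fun \<Rightarrow> phase_fun" where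
  "d_pphi F r phi pr pphi = deriv (\<lambda>x. F r phi pr x) pphi"

definition poisson :: "phase_fun \<Rightarrow> phase_fun \<Rightarrow> phase_fun" where
  "poisson F G r phi pr pphi =
     d_r F r phi pr pphi * d_pr G r phi pr pphi - d_pr F r phi pr pphi * d_r G r phi pr pphi
   + d_phi F r phi pr pphi * d_pphi G r phi pr pphi - d_pphi F r phi pr pphi * d_phi G r phi pr pphi"

definition H_nc2 :: "real \<Rightarrow> real \<Rightarrow> real \<Rightarrow> real \<Rightarrow> phase_fun" where
  "H_nc2 n k0 k1 k2 r phi pr pphi =
     (let kn = n - 1 in
      1/2 * r powr (2*n) * (pr^2 + pphi^2 / r^2) + k0 * r powr (n - 1)
      + r powr (2*kn) * (k1 / (cos (kn*phi))^2 + k2 * sin (kn*phi) / (cos (kn*phi))^2))"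

definition P1 :: "real \<Rightarrow> phase_fun" where
  "P1 n r phi pr pphi =
     (let kn = n - 1 in r powr n * (pr * cos (kn*phi) + (1/r) * pphi * sin (kn*phi)))"

definition J_c2 :: "real \<Rightarrow> real \<Rightarrow> real \<Rightarrow> real \<Rightarrow> phase_fun" where
  "J_c2 n k0 k1 k2 r phi pr pphi =
     (let kn = n - 1 in
      pphi^2 + 2 * (k1 / (cos (kn*phi))^2 + k2 * sin (kn*phi) / (cos (kn*phi))^2))"

definition J_c3 :: "real \<Rightarrow> real \<Rightarrow> real \<Rightarrow> real \<Rightarrow> phase_fun" where
  "J_c3 n k0 k1 k2 r phi pr pphi =
     (let kn = n - 1 in
      P1 n r phi pr pphi * pphi + k0 * sin (kn*phi)
      + 2 * k1 * r powr kn * (1 / cos (kn*phi)) * tan (kn*phi)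
      + k2 * r powr kn * ((1 / cos (kn*phi))^2 + (tan (kn*phi))^2))"

end

theory Submission
  imports Defs
begin

(* Write t = r^(n-1), s = sin((n-1)\<phi>), c = cos((n-1)\<phi>). Then
   H_nc2 = t\<^sup>2 r\<^sup>2 p_r\<^sup>2 / 2 + k0 t + (t\<^sup>2 / 2) J_c2, and J_c2 depends on (\<phi>, p_\<phi>) only,
   so J_c2 commutes with H_nc2. For J_c3 the partial derivatives are rational in t, r, s, c;
   in {J_c3, H_nc2} everything cancels except 2 (n-1) t\<^sup>3 p_\<phi> / c\<^sup>3 times
   (k1 + k2 s)(1 - s\<^sup>2 - c\<^sup>2), which vanishes. *)

lemma poisson_eq_partials:
  fixes F G :: phase_fun
  assumes "((\<lambda>x. F x phi pr pphi) has_real_derivative F_r) (at r)"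
    and "((\<lambda>x. F r x pr pphi) has_real_derivative F_phi) (at phi)"
    and "((\<lambda>x. F r phi x pphi) has_real_derivative F_pr) (at pr)"
    and "((\<lambda>x. F r phi pr x) has_real_derivative F_pphi) (at pphi)"
    and "((\<lambda>x. G x phi pr pphi) has_real_derivative G_r) (at r)"
    and "((\<lambda>x. G r x pr pphi) has_real_derivative G_phi) (at phi)"
    and "((\<lambda>x. G r phi x pphi) has_real_derivative G_pr) (at pr)"
    and "((\<lambda>x. G r phi pr x) has_real_derivative G_pphi) (at pphi)"
  shows "poisson F G r phi pr pphi = F_r * G_pr - F_pr * G_r + F_phi * G_pphi - F_pphi * G_phi"
  using assms
  by (simp add: poisson_def d_r_def d_phi_def d_pr_def d_pphi_def DERIV_imp_deriv)

lemma poisson_separable_eq_0: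
  fixes f :: "real \<Rightarrow> real \<Rightarrow> real" and H :: phase_fun
  assumes H: "\<And>x y. H r x pr y = a + b * f x y"
    and f_phi: "((\<lambda>x. f x pphi) has_real_derivative f_phi) (at phi)"
    and f_pphi: "((\<lambda>y. f phi y) has_real_derivative f_pphi) (at pphi)"
  shows "poisson (\<lambda>_ x _ y. f x y) H r phi pr pphi = 0"
proof -
  have "d_phi H r phi pr pphi = b * f_phi"
    unfolding d_phi_def H using f_phi by (auto intro!: DERIV_imp_deriv derivative_eq_intros)
  moreover have "d_pphi H r phi pr pphi = b * f_pphi"
    unfolding d_pphi_def H using f_pphi by (auto intro!: DERIV_imp_deriv derivative_eq_intros)
  ultimately show ?thesis
    using f_phi f_pphi
    by (simp add: poisson_def d_r_def d_phi_def d_pr_def d_pphi_def DERIV_imp_deriv)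
qed

lemma powr_diff_two: "0 < (r::real) \<Longrightarrow> r powr (a - 2) = r powr (a - 1) / r"
  using powr_diff[of r "a - 1" 1] by simp

lemma H_nc2_closed_form:
  assumes "0 < r"
  shows "H_nc2 n k0 k1 k2 r phi pr pphi =
    (r powr (n-1))^2 * (r^2 * pr^2 + pphi^2) / 2 + k0 * r powr (n-1)
    + (r powr (n-1))^2 * (k1 + k2 * sin ((n-1)*phi)) / (cos ((n-1)*phi))^2"
proof -
  have "r powr (2*n) = (r powr (n-1))^2 * r^2"
    using assms powr_add[of r "2*(n-1)" 2] by (simp add: powr_power)
  moreover have "r powr (2*(n-1)) = (r powr (n-1))^2"
    using assms by (simp add: powr_power)
  ultimately show ?thesis
    using assms unfolding H_nc2_def Let_def by (simp add: field_split_simps)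
qed

lemma H_nc2_separable:
  assumes "0 < r"
  shows "H_nc2 n k0 k1 k2 r phi pr pphi =
    (r powr (n-1))^2 * r^2 * pr^2 / 2 + k0 * r powr (n-1)
    + (r powr (n-1))^2 / 2 * J_c2 n k0 k1 k2 r phi pr pphi"
  unfolding H_nc2_closed_form[OF assms] J_c2_def Let_def by (simp add: field_split_simps)

lemma J_c3_closed_form:
  assumes "0 < r"
  shows "J_c3 n k0 k1 k2 r phi pr pphi =
    r powr (n-1) * (r * pr * cos ((n-1)*phi) + pphi * sin ((n-1)*phi)) * pphi
    + k0 * sin ((n-1)*phi)
    + r powr (n-1) * (2 * k1 * sin ((n-1)*phi) + k2 * (1 + (sin ((n-1)*phi))^2))
      / (cos ((n-1)*phi))^2"
proof -
  have "r powr n = r powr (n-1) * r"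
    using assms by (simp add: powr_diff)
  then show ?thesis
    using assms unfolding J_c3_def P1_def Let_def tan_def
    by (simp add: field_split_simps power2_eq_square)
qed

lemma J_c2_partials:
  fixes n k0 k1 k2 r phi pr pphi :: real
  defines "s \<equiv> sin ((n-1)*phi)" and "c \<equiv> cos ((n-1)*phi)"
  assumes c: "c \<noteq> 0"
  shows "((\<lambda>x. J_c2 n k0 k1 k2 r x pr pphi) has_real_derivative
           2 * (n-1) * (2 * k1 * s + k2 * (1 + s^2)) / c^3) (at phi)" (is ?d_phi)
    and "((\<lambda>x. J_c2 n k0 k1 k2 r phi pr x) has_real_derivative 2 * pphi) (at pphi)" (is ?d_pphi)
proof -
  show ?d_phi
    unfolding J_c2_def Let_def
    apply (rule derivative_eq_intros refl c[unfolded c_def] | simp)+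
    using c unfolding s_def c_def
    by (simp add: field_simps) (use sin_cos_squared_add[of "n*phi - phi"] in algebra)
  show ?d_pphi
    unfolding J_c2_def Let_def by (auto intro!: derivative_eq_intros)
qed

lemma H_nc2_partials:
  fixes n k0 k1 k2 r phi pr pphi :: real
  defines "t \<equiv> r powr (n-1)" and "s \<equiv> sin ((n-1)*phi)" and "c \<equiv> cos ((n-1)*phi)"
  assumes r: "0 < r" and c: "c \<noteq> 0"
  shows "((\<lambda>x. H_nc2 n k0 k1 k2 x phi pr pphi) has_real_derivative
           n * t^2 * r * pr^2 + (n-1) * t^2 * pphi^2 / r + (n-1) * k0 * t / r
           + 2 * (n-1) * t^2 * (k1 + k2 * s) / (r * c^2)) (at r)"
      (is "(_ has_real_derivative ?H_r) _")
    and "((\<lambda>x. H_nc2 n k0 k1 k2 r x pr pphi) has_real_derivative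
           (n-1) * t^2 * (2 * k1 * s + k2 * (1 + s^2)) / c^3) (at phi)" (is ?d_phi)
    and "((\<lambda>x. H_nc2 n k0 k1 k2 r phi x pphi) has_real_derivative t^2 * r^2 * pr) (at pr)"
      (is ?d_pr)
    and "((\<lambda>x. H_nc2 n k0 k1 k2 r phi pr x) has_real_derivative t^2 * pphi) (at pphi)"
      (is ?d_pphi)
proof -
  show "((\<lambda>x. H_nc2 n k0 k1 k2 x phi pr pphi) has_real_derivative ?H_r) (at r)"
  proof (rule has_field_derivative_transform_within_open[where S = "{0<..}"])
    show "((\<lambda>x. (x powr (n-1))^2 * (x^2 * pr^2 + pphi^2) / 2 + k0 * x powr (n-1)
        + (x powr (n-1))^2 * (k1 + k2 * s) / c^2) has_real_derivative ?H_r) (at r)"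
      unfolding t_def
      apply (rule derivative_eq_intros refl r c | simp add: powr_diff_two[OF r])+
      using r c by (simp add: field_simps) (simp add: algebra_simps power2_eq_square)
  qed (use r in \<open>auto simp: H_nc2_closed_form s_def c_def\<close>)
  show ?d_phi
    unfolding H_nc2_closed_form[OF r]
    apply (rule derivative_eq_intros refl c[unfolded c_def] | simp)+
    using c unfolding t_def s_def c_def
    by (simp add: field_simps) (use sin_cos_squared_add[of "n*phi - phi"] in algebra)
  show ?d_pr
    unfolding H_nc2_closed_form[OF r] t_def by (auto intro!: derivative_eq_intros)
  show ?d_pphi
    unfolding H_nc2_closed_form[OF r] t_def by (auto intro!: derivative_eq_intros)
qed

lemma J_c3_partials:
  fixes n k0 k1 k2 r phi pr pphi :: real
  defines "t \<equiv> r powr (n-1)" and "s \<equiv> sin ((n-1)*phi)" and "c \<equiv> cos ((n-1)*phi)"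
  assumes r: "0 < r" and c: "c \<noteq> 0"
  shows "((\<lambda>x. J_c3 n k0 k1 k2 x phi pr pphi) has_real_derivative
           n * t * pr * c * pphi + (n-1) * t * (pphi^2 * s + (2 * k1 * s + k2 * (1 + s^2)) / c^2) / r)
           (at r)" (is "(_ has_real_derivative ?J_r) _")
    and "((\<lambda>x. J_c3 n k0 k1 k2 r x pr pphi) has_real_derivative
           (n-1) * (t * pphi * (pphi * c - r * pr * s) + k0 * c
                    + 2 * t * (k1 * (1 + s^2) + 2 * k2 * s) / c^3)) (at phi)" (is ?d_phi)
    and "((\<lambda>x. J_c3 n k0 k1 k2 r phi x pphi) has_real_derivative t * r * c * pphi) (at pr)"
      (is ?d_pr)
    and "((\<lambda>x. J_c3 n k0 k1 k2 r phi pr x) has_real_derivative t * r * pr * c + 2 * t * pphi * s)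
           (at pphi)" (is ?d_pphi)
proof -
  show "((\<lambda>x. J_c3 n k0 k1 k2 x phi pr pphi) has_real_derivative ?J_r) (at r)"
  proof (rule has_field_derivative_transform_within_open[where S = "{0<..}"])
    show "((\<lambda>x. x powr (n-1) * (x * pr * c + pphi * s) * pphi + k0 * s
        + x powr (n-1) * (2 * k1 * s + k2 * (1 + s^2)) / c^2) has_real_derivative ?J_r) (at r)"
      unfolding t_def
      apply (rule derivative_eq_intros refl r c | simp add: powr_diff_two[OF r])+
      using r c by (simp add: field_simps) (simp add: algebra_simps power2_eq_square)
  qed (use r in \<open>auto simp: J_c3_closed_form s_def c_def\<close>)
  show ?d_phi
    unfolding J_c3_closed_form[OF r]
    apply (rule derivative_eq_intros refl c[unfolded c_def] | simp)+
    using c unfolding t_def s_def c_def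
    by (simp add: field_simps) (use sin_cos_squared_add[of "n*phi - phi"] in algebra)
  show ?d_pr
    unfolding J_c3_closed_form[OF r] t_def c_def by (auto intro!: derivative_eq_intros)
  show ?d_pphi
    unfolding J_c3_closed_form[OF r] t_def s_def c_def
    by (auto intro!: derivative_eq_intros simp: algebra_simps)
qed

lemma poisson_J_c2_H_nc2:
  assumes "0 < r" and "cos ((n - 1) * phi) \<noteq> 0"
  shows "poisson (J_c2 n k0 k1 k2) (H_nc2 n k0 k1 k2) r phi pr pphi = 0"
proof -
  have "J_c2 n k0 k1 k2 = (\<lambda>_ x _ y. J_c2 n k0 k1 k2 r x pr y)"
    by (simp add: J_c2_def fun_eq_iff)
  then show ?thesis
    by (subst \<open>J_c2 n k0 k1 k2 = _\<close>)
       (rule poisson_separable_eq_0 H_nc2_separable[OF assms(1)] J_c2_partials[OF assms(2)])+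
qed

lemma poisson_J_c3_H_nc2:
  fixes n k0 k1 k2 r phi pr pphi :: real
  defines "t \<equiv> r powr (n-1)" and "s \<equiv> sin ((n-1)*phi)" and "c \<equiv> cos ((n-1)*phi)"
  assumes r: "0 < r" and c: "c \<noteq> 0"
  shows "poisson (J_c3 n k0 k1 k2) (H_nc2 n k0 k1 k2) r phi pr pphi = 0"
proof -
  have "s^2 + c^2 = 1"
    unfolding s_def c_def by simp
  with r c show ?thesis
    unfolding poisson_eq_partials[OF J_c3_partials[OF r c[unfolded c_def]]
                                    H_nc2_partials[OF r c[unfolded c_def]], folded t_def s_def c_def]
    by (simp add: field_simps) algebra
qed

theorem mainTheorem8:
  fixes n k0 k1 k2 r phi pr pphi :: real
  assumes "n \<noteq> 1" and "r > 0" and "cos ((n - 1) * phi) \<noteq> 0"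
  shows "poisson (J_c2 n k0 k1 k2) (H_nc2 n k0 k1 k2) r phi pr pphi = 0
       \<and> poisson (J_c3 n k0 k1 k2) (H_nc2 n k0 k1 k2) r phi pr pphi = 0"
  using poisson_J_c2_H_nc2[OF assms(2,3)] poisson_J_c3_H_nc2[OF assms(2,3)] by simp

end
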